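(* Let $u\in\mathcal{L}PSH^*(\mathbb{C}^n)$ be toric with $c_\infty(u)<1$. Then $\mathcal{P}_\infty(u)$ is monomial, i.e. there exist finitely many monomials $z^J\in\mathcal{P}_\infty(u)$ such that every $P\in\mathcal{P}_\infty(u)$ is a $\mathbb{C}$-linear combination of them.
   Context: $\mathcal{L}PSH^*(\mathbb{C}^n)$: plurisubharmonic $u$ on $\mathbb{C}^n$ with $\limsup_{|z|\to\infty}u(z)/\log|z|<\infty$ and $u(z)\to+\infty$ as $|z|\to\infty$. Toric: $u(z)=u(|z_1|,\ldots,|z_n|)$. $g\in L^2(\infty)$ means $\int_{\mathbb{C}^n\setminus K}|g|^2d\lambda<\infty$ for some compact $K$; $c_\infty(u)=\inf\{c>0:e^{-cu}\in L^2(\infty)\}$; $\mathcal{P}_\infty(u)$ is the vector space of polynomials $P$ with $|P|e^{-u}\in L^2(\infty)$. *)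

theory Defs
  imports "HOL-Analysis.Analysis"
begin

definition usc :: "('a::topological_space \<Rightarrow> ereal) \<Rightarrow> bool" where
  "usc f \<longleftrightarrow> (\<forall>a::real. open {x. f x < ereal a})"

definition circle_mean :: "(complex \<Rightarrow> ereal) \<Rightarrow> complex \<Rightarrow> real \<Rightarrow> ereal" where
  "circle_mean v z r =
     (enn2ereal (\<integral>\<^sup>+ t\<in>{0..2*pi}. e2ennreal (v (z + of_real r * cis t)) \<partial>lborel)
      - enn2ereal (\<integral>\<^sup>+ t\<in>{0..2*pi}. e2ennreal (- v (z + of_real r * cis t)) \<partial>lborel))
     / ereal (2*pi)"

definition subharmonic :: "(complex \<Rightarrow> ereal) \<Rightarrow> bool" where
  "subharmonic v \<longleftrightarrow> usc v \<and> (\<forall>z r. r > 0 \<longrightarrow> v z \<le> circle_mean v z r)"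

definition psh :: "(complex^'n \<Rightarrow> ereal) \<Rightarrow> bool" where
  "psh u \<longleftrightarrow> usc u \<and> (\<forall>a b. subharmonic (\<lambda>w. u (a + w *s b)))"

definition LPSH_star :: "(complex^'n \<Rightarrow> ereal) \<Rightarrow> bool" where
  "LPSH_star u \<longleftrightarrow> psh u
     \<and> Limsup at_infinity (\<lambda>z. u z / ereal (ln (norm z))) < \<infinity>
     \<and> (u \<longlongrightarrow> \<infinity>) at_infinity"

definition toric :: "(complex^'n \<Rightarrow> ereal) \<Rightarrow> bool" where
  "toric u \<longleftrightarrow> (\<forall>z w. (\<forall>i. norm (z$i) = norm (w$i)) \<longrightarrow> u z = u w)"

definition eexp :: "ereal \<Rightarrow> ennreal" where
  "eexp x = (case x of ereal r \<Rightarrow> ennreal (exp r) | PInfty \<Rightarrow> \<infinity> | MInfty \<Rightarrow> 0)"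

definition L2_infty :: "(complex^'n \<Rightarrow> ennreal) \<Rightarrow> bool" where
  "L2_infty g \<longleftrightarrow> (\<exists>K. compact K \<and> (\<integral>\<^sup>+ z\<in>(UNIV - K). (g z)^2 \<partial>lborel) < \<infinity>)"

definition c_infty :: "(complex^'n \<Rightarrow> ereal) \<Rightarrow> ereal" where
  "c_infty u = Inf {ereal c | c. c > 0 \<and> L2_infty (\<lambda>z. eexp (- (ereal c * u z)))}"

definition monomial :: "('n::finite \<Rightarrow> nat) \<Rightarrow> complex^'n \<Rightarrow> complex" where
  "monomial J z = (\<Prod>i\<in>UNIV. (z$i) ^ J i)"

definition polynomial_fun :: "(complex^'n::finite \<Rightarrow> complex) \<Rightarrow> bool" where
  "polynomial_fun P \<longleftrightarrow> (\<exists>S c. finite S \<and> (\<forall>z. P z = (\<Sum>J\<in>S. c J * monomial J z)))"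

definition P_infty :: "(complex^'n::finite \<Rightarrow> ereal) \<Rightarrow> (complex^'n \<Rightarrow> complex) set" where
  "P_infty u = {P. polynomial_fun P \<and> L2_infty (\<lambda>z. ennreal (norm (P z)) * eexp (- u z))}"

end

theory Submission
  imports Defs
begin

text \<open>
  Write P = \<Sum> c_J z^J. As u is toric, both exp(-u) and Lebesgue measure are invariant under the
  coordinatewise rotations z \<mapsto> (\<zeta>_1 z_1, ..., \<zeta>_n z_n) with |\<zeta>_j| = 1, so |P(\<zeta> z)| exp(-u(z))
  is square integrable near infinity together with |P| exp(-u). Averaging conj(\<zeta>^J) P(\<zeta> z) over
  the N-th roots of unity, N larger than all exponents of P, isolates c_J z^J; hence every monomial
  occurring in P lies in P_\<infinity>(u). On the other hand u \<le> A log |z| near infinity gives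
  exp(-u) \<ge> |z|^-A, so z^J exp(-u) is not square integrable near infinity once |J| \<ge> A + 1:
  only finitely many monomials lie in P_\<infinity>(u).
\<close>

section \<open>Invariance of Lebesgue measure under coordinatewise rotations\<close>

lemma nn_integral_lborel_shear:
  fixes F :: "'a::euclidean_space \<Rightarrow> ennreal"
  assumes F[measurable]: "F \<in> borel_measurable borel"
    and b1: "b1 \<in> Basis" and b2: "b2 \<in> Basis" and ne: "b1 \<noteq> b2"
  shows "(\<integral>\<^sup>+z. F (z + (t * (z \<bullet> b2)) *\<^sub>R b1) \<partial>lborel) = (\<integral>\<^sup>+z. F z \<partial>lborel)"
proof -
  interpret product_sigma_finite "\<lambda>_. lborel :: real measure"
    by standard
  define I where "I = (Basis::'a set) - {b1}"
  have BI: "(Basis::'a set) = insert b1 I" "finite I" "b1 \<notin> I" "b2 \<in> I"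
    using b1 b2 ne by (auto simp: I_def)
  define \<Phi> where "\<Phi> = (\<lambda>f. \<Sum>b\<in>(Basis::'a set). f b *\<^sub>R b)"
  have [measurable]: "\<Phi> \<in> borel_measurable (\<Pi>\<^sub>M b\<in>Basis. lborel)"
    unfolding \<Phi>_def by measurable
  have \<Phi>_b2: "\<Phi> f \<bullet> b2 = f b2" for f
    unfolding \<Phi>_def using b2
    by (simp add: inner_sum_left inner_Basis if_distrib sum.delta cong: if_cong)
  have \<Phi>_upd: "\<Phi> (x(b1 := y)) = (\<Sum>b\<in>I. x b *\<^sub>R b) + y *\<^sub>R b1" for x y
  proof -
    have "\<Phi> (x(b1 := y)) = y *\<^sub>R b1 + (\<Sum>b\<in>I. (x(b1 := y)) b *\<^sub>R b)"
      unfolding \<Phi>_def I_def by (simp add: sum.remove[OF finite_Basis b1])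
    also have "(\<Sum>b\<in>I. (x(b1 := y)) b *\<^sub>R b) = (\<Sum>b\<in>I. x b *\<^sub>R b)"
      by (rule sum.cong) (auto simp: I_def)
    finally show ?thesis by (simp only: add.commute)
  qed
  \<comment> \<open>By Fubini in the coordinate b1 the shear becomes a translation of each fibre.\<close>
  have "(\<integral>\<^sup>+z. F (z + (t * (z \<bullet> b2)) *\<^sub>R b1) \<partial>lborel)
      = (\<integral>\<^sup>+x. (\<integral>\<^sup>+y. F (\<Phi> (x(b1:=y)) + (t * (\<Phi> (x(b1:=y)) \<bullet> b2)) *\<^sub>R b1) \<partial>lborel) \<partial>(\<Pi>\<^sub>M b\<in>I. lborel))"
    unfolding BI(1)
    by (subst lborel_eq) (simp add: nn_integral_distr \<Phi>_def product_nn_integral_insert BI)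
  also have "\<dots> = (\<integral>\<^sup>+x. (\<integral>\<^sup>+y. F ((\<Sum>b\<in>I. x b *\<^sub>R b) + (y + t * x b2) *\<^sub>R b1) \<partial>lborel) \<partial>(\<Pi>\<^sub>M b\<in>I. lborel))"
    using ne by (simp only: \<Phi>_b2) (simp add: \<Phi>_upd algebra_simps)
  also have "\<dots> = (\<integral>\<^sup>+x. (\<integral>\<^sup>+y. F ((\<Sum>b\<in>I. x b *\<^sub>R b) + y *\<^sub>R b1) \<partial>lborel) \<partial>(\<Pi>\<^sub>M b\<in>I. lborel))"
  proof (rule nn_integral_cong)
    fix x
    show "(\<integral>\<^sup>+y. F ((\<Sum>b\<in>I. x b *\<^sub>R b) + (y + t * x b2) *\<^sub>R b1) \<partial>lborel)
        = (\<integral>\<^sup>+y. F ((\<Sum>b\<in>I. x b *\<^sub>R b) + y *\<^sub>R b1) \<partial>lborel)"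
      using nn_integral_real_affine[of "\<lambda>y. F ((\<Sum>b\<in>I. x b *\<^sub>R b) + y *\<^sub>R b1)" 1 "t * x b2"]
      by (simp add: add.commute)
  qed
  also have "\<dots> = (\<integral>\<^sup>+z. F z \<partial>lborel)"
    unfolding BI(1)
    by (subst (2) lborel_eq) (simp add: nn_integral_distr \<Phi>_def product_nn_integral_insert BI flip: \<Phi>_upd)
  finally show ?thesis .
qed

definition diag_scale :: "('n \<Rightarrow> complex) \<Rightarrow> complex^'n \<Rightarrow> complex^'n" where
  "diag_scale v z = (\<chi> j. v j * z$j)"

lemma diag_scale_diag_scale: "diag_scale a (diag_scale b z) = diag_scale (\<lambda>j. a j * b j) z"
  unfolding diag_scale_def by (simp add: vec_eq_iff)

lemma diag_scale_one [simp]: "diag_scale (\<lambda>j. 1) z = z"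
  unfolding diag_scale_def by (simp add: vec_eq_iff)

lemma continuous_on_diag_scale: "continuous_on A (diag_scale v)"
  unfolding diag_scale_def by (intro continuous_intros)

lemma borel_measurable_diag_scale [measurable]: "diag_scale v \<in> borel_measurable borel"
  by (intro borel_measurable_continuous_onI continuous_on_diag_scale)

lemma nn_integral_lborel_rotate_coordinate_Im_nonzero:
  fixes f :: "complex^'n \<Rightarrow> ennreal"
  assumes [measurable]: "f \<in> borel_measurable borel" and w: "norm w = 1" and "Im w \<noteq> 0"
  shows "(\<integral>\<^sup>+z. f (diag_scale (\<lambda>j. if j = i then w else 1) z) \<partial>lborel) = (\<integral>\<^sup>+z. f z \<partial>lborel)"
proof -
  \<comment> \<open>A plane rotation by the angle \<theta> is the product of three shears, with parameters
    (cos \<theta> - 1) / sin \<theta>, sin \<theta> and (cos \<theta> - 1) / sin \<theta>.\<close>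
  define a where "a = (Re w - 1) / Im w"
  define X where "X = (\<lambda>z::complex^'n. z + (a * (z \<bullet> axis i \<i>)) *\<^sub>R axis i 1)"
  define Y where "Y = (\<lambda>z::complex^'n. z + (Im w * (z \<bullet> axis i 1)) *\<^sub>R axis i \<i>)"
  have [measurable]: "X \<in> borel_measurable borel" "Y \<in> borel_measurable borel"
    unfolding X_def Y_def by (intro borel_measurable_continuous_onI continuous_intros)+
  have B: "axis i 1 \<in> (Basis :: (complex^'n) set)" "axis i \<i> \<in> (Basis :: (complex^'n) set)"
    "axis i 1 \<noteq> (axis i \<i> :: complex^'n)"
    by (auto simp: Basis_vec_def axis_eq_axis)
  have "(Re w)^2 + (Im w)^2 = 1"
    using w by (simp add: cmod_def)
  then have a_Im: "a * Im w = Re w - 1" and a_Re: "a * (Re w + 1) = - Im w"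
    using \<open>Im w \<noteq> 0\<close> by (simp_all add: a_def field_simps power2_eq_square)
  have X_nth: "X z $ j = (if j = i then Complex (Re (z$j) + a * Im (z$j)) (Im (z$j)) else z$j)" for z j
    unfolding X_def inner_axis by (simp add: axis_def complex_eq_iff)
  have Y_nth: "Y z $ j = (if j = i then Complex (Re (z$j)) (Im (z$j) + Im w * Re (z$j)) else z$j)" for z j
    unfolding Y_def inner_axis by (simp add: axis_def complex_eq_iff)
  have "X (Y (X z)) = diag_scale (\<lambda>j. if j = i then w else 1) z" for z
  proof -
    have "x + a*y + a*(y + Im w*(x + a*y)) = Re w * x - Im w * y"
      and "y + Im w*(x + a*y) = Im w * x + Re w * y" for x y
      using a_Im a_Re by algebra+
    then show ?thesis
      by (simp add: X_nth Y_nth diag_scale_def vec_eq_iff complex_eq_iff)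
  qed
  then have "(\<integral>\<^sup>+z. f (diag_scale (\<lambda>j. if j = i then w else 1) z) \<partial>lborel)
      = (\<integral>\<^sup>+z. (\<lambda>z. f (X (Y z))) (X z) \<partial>lborel)"
    by simp
  also have "\<dots> = (\<integral>\<^sup>+z. (\<lambda>z. f (X z)) (Y z) \<partial>lborel)"
    unfolding X_def by (rule nn_integral_lborel_shear) (use B in auto)
  also have "\<dots> = (\<integral>\<^sup>+z. f (X z) \<partial>lborel)"
    unfolding Y_def by (rule nn_integral_lborel_shear) (use B in auto)
  also have "\<dots> = (\<integral>\<^sup>+z. f z \<partial>lborel)"
    unfolding X_def by (rule nn_integral_lborel_shear) (use B in auto)
  finally show ?thesis .
qed

lemma nn_integral_lborel_rotate_coordinate:
  fixes f :: "complex^'n \<Rightarrow> ennreal"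
  assumes [measurable]: "f \<in> borel_measurable borel" and w: "norm w = 1"
  shows "(\<integral>\<^sup>+z. f (diag_scale (\<lambda>j. if j = i then w else 1) z) \<partial>lborel) = (\<integral>\<^sup>+z. f z \<partial>lborel)"
proof (cases "Im w = 0")
  case True
  \<comment> \<open>The three-shear factorisation fails for w = \<plusminus>1; write w = \<i> * (- \<i> * w) instead.\<close>
  have "\<bar>Re w\<bar> = 1" using w True by (simp add: cmod_def)
  then have Im: "Im \<i> \<noteq> 0" "Im (- \<i> * w) \<noteq> 0" "norm (- \<i> * w) = 1"
    using w by (auto simp: norm_mult)
  have "diag_scale (\<lambda>j. if j = i then w else 1) z
      = diag_scale (\<lambda>j. if j = i then \<i> else 1) (diag_scale (\<lambda>j. if j = i then - \<i> * w else 1) z)" for z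
    by (simp add: diag_scale_diag_scale if_distrib cong: if_cong)
  then have "(\<integral>\<^sup>+z. f (diag_scale (\<lambda>j. if j = i then w else 1) z) \<partial>lborel)
      = (\<integral>\<^sup>+z. (\<lambda>z. f (diag_scale (\<lambda>j. if j = i then \<i> else 1) z))
                 (diag_scale (\<lambda>j. if j = i then - \<i> * w else 1) z) \<partial>lborel)"
    by simp
  also have "\<dots> = (\<integral>\<^sup>+z. f (diag_scale (\<lambda>j. if j = i then \<i> else 1) z) \<partial>lborel)"
    using Im by (intro nn_integral_lborel_rotate_coordinate_Im_nonzero) auto
  also have "\<dots> = (\<integral>\<^sup>+z. f z \<partial>lborel)"
    by (rule nn_integral_lborel_rotate_coordinate_Im_nonzero) auto
  finally show ?thesis .
qed (rule nn_integral_lborel_rotate_coordinate_Im_nonzero[OF assms])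

lemma nn_integral_lborel_diag_scale:
  fixes f :: "complex^'n \<Rightarrow> ennreal"
  assumes "f \<in> borel_measurable borel" and v: "\<And>j. norm (v j) = 1"
  shows "(\<integral>\<^sup>+z. f (diag_scale v z) \<partial>lborel) = (\<integral>\<^sup>+z. f z \<partial>lborel)"
proof -
  have "(\<integral>\<^sup>+z. f (diag_scale (\<lambda>j. if j \<in> S then v j else 1) z) \<partial>lborel) = (\<integral>\<^sup>+z. f z \<partial>lborel)"
    if "finite S" "f \<in> borel_measurable borel" for S and f :: "complex^'n \<Rightarrow> ennreal"
    using that
  proof (induction S arbitrary: f rule: finite_induct)
    case (insert i S)
    note [measurable] = insert.prems
    have "diag_scale (\<lambda>j. if j \<in> insert i S then v j else 1) z
        = diag_scale (\<lambda>j. if j = i then v i else 1) (diag_scale (\<lambda>j. if j \<in> S then v j else 1) z)" for z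
      using insert.hyps by (auto simp: diag_scale_diag_scale intro!: arg_cong[where f="\<lambda>g. diag_scale g z"])
    then have "(\<integral>\<^sup>+z. f (diag_scale (\<lambda>j. if j \<in> insert i S then v j else 1) z) \<partial>lborel)
        = (\<integral>\<^sup>+z. (\<lambda>z. f (diag_scale (\<lambda>j. if j = i then v i else 1) z))
                   (diag_scale (\<lambda>j. if j \<in> S then v j else 1) z) \<partial>lborel)"
      by simp
    also have "\<dots> = (\<integral>\<^sup>+z. f (diag_scale (\<lambda>j. if j = i then v i else 1) z) \<partial>lborel)"
      by (rule insert.IH) measurable
    also have "\<dots> = (\<integral>\<^sup>+z. f z \<partial>lborel)"
      by (rule nn_integral_lborel_rotate_coordinate) (auto simp: v)
    finally show ?case .
  qed simp
  from this[of UNIV] show ?thesis using assms by simp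
qed

section \<open>Square integrability near infinity\<close>

lemma ennreal_power2_add_le: "(a + b)^2 \<le> 4 * a^2 + 4 * (b::ennreal)^2"
proof -
  have "(a + b)^2 \<le> (2 * max a b)^2"
    by (intro power_mono) (simp_all add: mult_2 add_mono)
  also have "\<dots> = 4 * (max a b)^2"
    by (simp add: power_mult_distrib)
  also have "(max a b)^2 \<le> a^2 + b^2"
    by (cases "a \<le> b") (auto simp: max_def intro: add_increasing add_increasing2)
  finally show ?thesis
    by (simp add: distrib_left mult_left_mono)
qed

lemma L2_infty_mono:
  assumes "\<And>z. f z \<le> g z" and "L2_infty g"
  shows "L2_infty f"
proof -
  obtain K where "compact K" and K: "(\<integral>\<^sup>+ z\<in>(UNIV - K). (g z)^2 \<partial>lborel) < \<infinity>"
    using assms(2) unfolding L2_infty_def by blast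
  moreover have "(\<integral>\<^sup>+ z\<in>(UNIV - K). (f z)^2 \<partial>lborel) \<le> (\<integral>\<^sup>+ z\<in>(UNIV - K). (g z)^2 \<partial>lborel)"
    by (intro nn_integral_mono mult_right_mono power_mono assms(1)) auto
  ultimately show ?thesis
    unfolding L2_infty_def by (meson le_less_trans)
qed

lemma L2_infty_zero: "L2_infty (\<lambda>z. 0)"
  unfolding L2_infty_def by (rule exI[of _ "{}"]) simp

lemma L2_infty_add:
  assumes [measurable]: "f \<in> borel_measurable borel" "g \<in> borel_measurable borel"
    and "L2_infty f" "L2_infty g"
  shows "L2_infty (\<lambda>z. f z + g z)"
proof -
  obtain K1 where K1: "compact K1" "(\<integral>\<^sup>+ z\<in>(UNIV - K1). (f z)^2 \<partial>lborel) < \<infinity>"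
    using assms(3) unfolding L2_infty_def by blast
  obtain K2 where K2: "compact K2" "(\<integral>\<^sup>+ z\<in>(UNIV - K2). (g z)^2 \<partial>lborel) < \<infinity>"
    using assms(4) unfolding L2_infty_def by blast
  have [measurable]: "UNIV - K1 \<in> sets borel" "UNIV - K2 \<in> sets borel"
    using K1(1) K2(1) by (auto intro!: borel_open open_Diff compact_imp_closed)
  have "(\<integral>\<^sup>+ z\<in>(UNIV - (K1 \<union> K2)). (f z + g z)^2 \<partial>lborel)
      \<le> (\<integral>\<^sup>+ z. 4 * ((f z)^2 * indicator (UNIV - K1) z) + 4 * ((g z)^2 * indicator (UNIV - K2) z) \<partial>lborel)"
    using ennreal_power2_add_le by (intro nn_integral_mono) (auto split: split_indicator)
  also have "\<dots> = 4 * (\<integral>\<^sup>+ z\<in>(UNIV - K1). (f z)^2 \<partial>lborel) + 4 * (\<integral>\<^sup>+ z\<in>(UNIV - K2). (g z)^2 \<partial>lborel)"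
    by (simp add: nn_integral_add nn_integral_cmult)
  also have "\<dots> < \<infinity>"
    using K1(2) K2(2) by (simp add: ennreal_mult_less_top)
  finally show ?thesis
    unfolding L2_infty_def using K1(1) K2(1) by (blast intro: compact_Un)
qed

lemma L2_infty_cmult:
  assumes "c < \<infinity>" and [measurable]: "g \<in> borel_measurable borel" and "L2_infty g"
  shows "L2_infty (\<lambda>z. c * g z)"
proof -
  obtain K where K: "compact K" "(\<integral>\<^sup>+ z\<in>(UNIV - K). (g z)^2 \<partial>lborel) < \<infinity>"
    using assms(3) unfolding L2_infty_def by blast
  have [measurable]: "UNIV - K \<in> sets borel"
    using K(1) by (auto intro!: borel_open open_Diff compact_imp_closed)
  have "(\<integral>\<^sup>+ z\<in>(UNIV - K). (c * g z)^2 \<partial>lborel) = c^2 * (\<integral>\<^sup>+ z\<in>(UNIV - K). (g z)^2 \<partial>lborel)"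
    by (simp add: power_mult_distrib mult.assoc nn_integral_cmult)
  also have "\<dots> < \<infinity>"
    using K(2) assms(1) by (simp add: ennreal_mult_less_top power_less_top_ennreal)
  finally show ?thesis
    using K(1) unfolding L2_infty_def by blast
qed

lemma L2_infty_compose_diag_scale:
  assumes [measurable]: "g \<in> borel_measurable borel" and "L2_infty g" and v: "\<And>j. norm (v j) = 1"
  shows "L2_infty (\<lambda>z. g (diag_scale v z))"
proof -
  obtain K where K: "compact K" "(\<integral>\<^sup>+ z\<in>(UNIV - K). (g z)^2 \<partial>lborel) < \<infinity>"
    using assms(2) unfolding L2_infty_def by blast
  have [measurable]: "UNIV - K \<in> sets borel"
    using K(1) by (auto intro!: borel_open open_Diff compact_imp_closed)
  define K' where "K' = diag_scale (\<lambda>j. cnj (v j)) ` K"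
  have "compact K'"
    unfolding K'_def by (rule compact_continuous_image[OF continuous_on_diag_scale K(1)])
  have "v j * cnj (v j) = 1" for j
    using complex_norm_square[of "v j"] v[of j] by simp
  then have inverse: "diag_scale (\<lambda>j. cnj (v j)) (diag_scale v z) = z"
    "diag_scale v (diag_scale (\<lambda>j. cnj (v j)) z) = z" for z
    by (simp_all add: diag_scale_diag_scale mult.commute)
  then have "z \<in> K' \<longleftrightarrow> diag_scale v z \<in> K" for z
    unfolding K'_def by (auto intro: image_eqI[where x="diag_scale v z"])
  then have "(\<integral>\<^sup>+ z\<in>(UNIV - K'). (g (diag_scale v z))^2 \<partial>lborel)
      = (\<integral>\<^sup>+ z. (\<lambda>w. (g w)^2 * indicator (UNIV - K) w) (diag_scale v z) \<partial>lborel)"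
    by (intro nn_integral_cong) (simp split: split_indicator)
  also have "\<dots> = (\<integral>\<^sup>+ z\<in>(UNIV - K). (g z)^2 \<partial>lborel)"
    by (rule nn_integral_lborel_diag_scale[OF _ v]) measurable
  finally show ?thesis
    using K \<open>compact K'\<close> unfolding L2_infty_def by auto
qed

lemma eexp_ereal_if: "eexp x = (if x = \<infinity> then \<infinity> else if x = -\<infinity> then 0 else ennreal (exp (real_of_ereal x)))"
  by (cases x) (auto simp: eexp_def)

lemma borel_measurable_eexp [measurable]: "eexp \<in> borel_measurable borel"
  unfolding eexp_ereal_if[abs_def] by measurable

lemma eexp_mono: "x \<le> y \<Longrightarrow> eexp x \<le> eexp y"
  by (cases x; cases y) (auto simp: eexp_def ennreal_leI)

definition L2_infty_weighted :: "(complex^'n \<Rightarrow> ereal) \<Rightarrow> (complex^'n \<Rightarrow> complex) \<Rightarrow> bool" where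
  "L2_infty_weighted u f \<longleftrightarrow> L2_infty (\<lambda>z. ennreal (norm (f z)) * eexp (- u z))"

lemma L2_infty_weighted_add:
  assumes [measurable]: "u \<in> borel_measurable borel" "f \<in> borel_measurable borel" "g \<in> borel_measurable borel"
    and "L2_infty_weighted u f" "L2_infty_weighted u g"
  shows "L2_infty_weighted u (\<lambda>z. f z + g z)"
proof -
  have "L2_infty (\<lambda>z. ennreal (norm (f z)) * eexp (- u z) + ennreal (norm (g z)) * eexp (- u z))"
    using assms(4,5) unfolding L2_infty_weighted_def by (intro L2_infty_add) measurable
  moreover have "ennreal (norm (f z + g z)) \<le> ennreal (norm (f z)) + ennreal (norm (g z))" for z
    by (simp add: ennreal_plus[symmetric] ennreal_leI norm_triangle_ineq del: ennreal_plus)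
  ultimately show ?thesis
    unfolding L2_infty_weighted_def
    by (elim L2_infty_mono[rotated]) (simp add: mult_right_mono flip: distrib_right)
qed

lemma L2_infty_weighted_sum:
  assumes "finite T" and "u \<in> borel_measurable borel" and "\<And>k. k \<in> T \<Longrightarrow> f k \<in> borel_measurable borel"
    and "\<And>k. k \<in> T \<Longrightarrow> L2_infty_weighted u (f k)"
  shows "L2_infty_weighted u (\<lambda>z. \<Sum>k\<in>T. f k z)"
  using assms
proof (induction T rule: finite_induct)
  case empty
  show ?case
    unfolding L2_infty_weighted_def by (simp add: L2_infty_zero)
next
  case (insert k T)
  then show ?case
    by (simp add: L2_infty_weighted_add borel_measurable_sum)
qed

lemma L2_infty_weighted_cmult:
  assumes [measurable]: "u \<in> borel_measurable borel" "f \<in> borel_measurable borel"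
    and "L2_infty_weighted u f"
  shows "L2_infty_weighted u (\<lambda>z. c * f z)"
proof -
  have "L2_infty (\<lambda>z. ennreal (norm c) * (ennreal (norm (f z)) * eexp (- u z)))"
    using assms(3) unfolding L2_infty_weighted_def by (intro L2_infty_cmult) simp_all
  then show ?thesis
    unfolding L2_infty_weighted_def by (simp add: norm_mult ennreal_mult mult.assoc)
qed

lemma L2_infty_weighted_cmult_iff:
  assumes "c \<noteq> 0" and [measurable]: "u \<in> borel_measurable borel" "f \<in> borel_measurable borel"
  shows "L2_infty_weighted u (\<lambda>z. c * f z) \<longleftrightarrow> L2_infty_weighted u f"
proof
  assume "L2_infty_weighted u (\<lambda>z. c * f z)"
  from L2_infty_weighted_cmult[OF assms(2) _ this]
  have "L2_infty_weighted u (\<lambda>z. inverse c * (c * f z))"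
    by measurable
  then show "L2_infty_weighted u f"
    using \<open>c \<noteq> 0\<close> by (simp add: mult.assoc[symmetric])
qed (rule L2_infty_weighted_cmult[OF assms(2,3)])

lemma toric_diag_scale:
  assumes "toric u" and "\<And>j. norm (v j) = 1"
  shows "u (diag_scale v z) = u z"
  using assms unfolding toric_def diag_scale_def by (auto simp: norm_mult)

lemma L2_infty_weighted_compose_diag_scale:
  assumes "toric u" and v: "\<And>j. norm (v j) = 1"
    and [measurable]: "u \<in> borel_measurable borel" "f \<in> borel_measurable borel"
    and "L2_infty_weighted u f"
  shows "L2_infty_weighted u (\<lambda>z. f (diag_scale v z))"
proof -
  have "L2_infty (\<lambda>z. ennreal (norm (f (diag_scale v z))) * eexp (- u (diag_scale v z)))"
    using assms(5) unfolding L2_infty_weighted_def by (intro L2_infty_compose_diag_scale v) simp_all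
  then show ?thesis
    unfolding L2_infty_weighted_def toric_diag_scale[OF \<open>toric u\<close> v] .
qed

section \<open>Averaging over roots of unity\<close>

lemma root_of_unity_power_eq_iff:
  fixes a b N :: nat
  assumes "a < N" and "b < N"
  shows "cis (2 * pi / N) ^ a = cis (2 * pi / N) ^ b \<longleftrightarrow> a = b"
proof -
  have "inj_on (\<lambda>k. cis (2 * pi * real k / real N)) {..<N}"
    using Complex.bij_betw_roots_unity[of N] assms by (simp add: bij_betw_def)
  moreover have "cis (2 * pi / N) ^ k = cis (2 * pi * real k / real N)" for k
    by (simp add: Complex.DeMoivre algebra_simps)
  ultimately show ?thesis
    using assms by (auto simp: inj_on_def)
qed

lemma sum_root_of_unity_orthogonality:
  fixes a b N :: nat
  assumes "a < N" and "b < N"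
  defines "\<omega> \<equiv> cis (2 * pi / N)"
  shows "(\<Sum>m<N. (\<omega>^a * cnj \<omega>^b)^m) = (if a = b then of_nat N else 0)"
proof -
  have unit: "\<omega>^b * cnj \<omega>^b = 1"
    by (simp add: \<omega>_def cis_cnj cis_mult flip: power_mult_distrib)
  have "real N * (2 * pi / real N) = 2 * pi"
    using assms by simp
  then have "\<omega>^N = 1"
    by (simp add: \<omega>_def Complex.DeMoivre)
  moreover have "(\<omega>^a * cnj \<omega>^b)^N = (\<omega>^N)^a * cnj ((\<omega>^N)^b)"
    by (simp add: power_mult_distrib flip: power_mult) (simp add: mult.commute)
  ultimately have "(\<omega>^a * cnj \<omega>^b)^N = 1"
    by simp
  moreover have "\<omega>^a * cnj \<omega>^b = 1 \<longleftrightarrow> a = b"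
  proof -
    have "\<omega>^a * cnj \<omega>^b = 1 \<longleftrightarrow> \<omega>^a = \<omega>^b"
      using unit by (metis mult.assoc mult.commute mult_1 mult_1_right)
    then show ?thesis
      unfolding \<omega>_def using root_of_unity_power_eq_iff[OF assms(1,2)] by simp
  qed
  ultimately show ?thesis
    using unit by (simp add: sum_gp_strict)
qed

lemma borel_measurable_monomial [measurable]: "monomial J \<in> borel_measurable borel"
  unfolding monomial_def[abs_def] by (intro borel_measurable_continuous_onI continuous_intros)

lemma monomial_diag_scale: "monomial J (diag_scale v z) = (\<Prod>j\<in>UNIV. v j ^ J j) * monomial J z"
  unfolding monomial_def diag_scale_def by (simp add: power_mult_distrib prod.distrib)

lemma sum_torus_roots_of_unity_orthogonality:
  fixes J J0 :: "'n::finite \<Rightarrow> nat"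
  assumes "\<And>j. J j < N" and "\<And>j. J0 j < N"
  defines "\<omega> \<equiv> cis (2 * pi / N)"
  shows "(\<Sum>k\<in>PiE UNIV (\<lambda>_. {..<N}). cnj (\<Prod>j\<in>UNIV. (\<omega> ^ k j) ^ J0 j) * (\<Prod>j\<in>UNIV. (\<omega> ^ k j) ^ J j))
       = (if J = J0 then of_nat N ^ CARD('n) else 0)"
proof -
  have "(\<Sum>k\<in>PiE UNIV (\<lambda>_. {..<N}). cnj (\<Prod>j\<in>UNIV. (\<omega> ^ k j) ^ J0 j) * (\<Prod>j\<in>UNIV. (\<omega> ^ k j) ^ J j))
      = (\<Sum>k\<in>PiE UNIV (\<lambda>_. {..<N}). \<Prod>j\<in>UNIV. (\<omega>^J j * cnj \<omega>^J0 j)^k j)"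
    by (simp add: prod.distrib power_mult_distrib mult.commute flip: power_mult)
  also have "\<dots> = (\<Prod>j\<in>UNIV. \<Sum>m<N. (\<omega>^J j * cnj \<omega>^J0 j)^m)"
    by (rule prod_sum_PiE[symmetric]) auto
  also have "\<dots> = (\<Prod>j\<in>UNIV. if J j = J0 j then of_nat N else 0)"
    using assms by (simp add: sum_root_of_unity_orthogonality)
  also have "\<dots> = (if J = J0 then of_nat N ^ CARD('n) else 0)"
    by (auto simp: fun_eq_iff)
  finally show ?thesis .
qed

lemma sum_torus_orbit_extracts_monomial:
  fixes c :: "('n::finite \<Rightarrow> nat) \<Rightarrow> complex"
  assumes "finite S" and "J0 \<in> S" and N: "\<And>J j. J \<in> S \<Longrightarrow> J j < N"
  defines "\<omega> \<equiv> cis (2 * pi / N)"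
  shows "(\<Sum>k\<in>PiE UNIV (\<lambda>_. {..<N}). cnj (\<Prod>j\<in>UNIV. (\<omega> ^ k j) ^ J0 j)
            * (\<Sum>J\<in>S. c J * monomial J (diag_scale (\<lambda>j. \<omega> ^ k j) z)))
       = of_nat N ^ CARD('n) * c J0 * monomial J0 z"
proof -
  have "(\<Sum>k\<in>PiE UNIV (\<lambda>_. {..<N}). cnj (\<Prod>j\<in>UNIV. (\<omega> ^ k j) ^ J0 j)
            * (\<Sum>J\<in>S. c J * monomial J (diag_scale (\<lambda>j. \<omega> ^ k j) z)))
      = (\<Sum>J\<in>S. c J * monomial J z * (\<Sum>k\<in>PiE UNIV (\<lambda>_. {..<N}).
            cnj (\<Prod>j\<in>UNIV. (\<omega> ^ k j) ^ J0 j) * (\<Prod>j\<in>UNIV. (\<omega> ^ k j) ^ J j)))"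
    by (simp add: monomial_diag_scale sum_distrib_left sum_distrib_right mult_ac sum.swap[of _ "PiE _ _"])
  also have "\<dots> = (\<Sum>J\<in>S. c J * monomial J z * (if J = J0 then of_nat N ^ CARD('n) else 0))"
  proof (rule sum.cong[OF refl])
    fix J assume "J \<in> S"
    then show "c J * monomial J z * (\<Sum>k\<in>PiE UNIV (\<lambda>_. {..<N}).
            cnj (\<Prod>j\<in>UNIV. (\<omega> ^ k j) ^ J0 j) * (\<Prod>j\<in>UNIV. (\<omega> ^ k j) ^ J j))
        = c J * monomial J z * (if J = J0 then of_nat N ^ CARD('n) else 0)"
      using N \<open>J0 \<in> S\<close> unfolding \<omega>_def by (subst sum_torus_roots_of_unity_orthogonality) auto
  qed
  also have "\<dots> = of_nat N ^ CARD('n) * c J0 * monomial J0 z"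
    using assms(1,2) by (simp add: if_distrib[of "\<lambda>x. _ * x"] sum.delta cong: if_cong)
  finally show ?thesis .
qed

lemma L2_infty_weighted_monomial_of_polynomial:
  fixes u :: "complex^'n::finite \<Rightarrow> ereal"
  assumes "toric u" and [measurable]: "u \<in> borel_measurable borel"
    and "finite S" and P: "\<And>z. P z = (\<Sum>J\<in>S. c J * monomial J z)" and "L2_infty_weighted u P"
    and "J0 \<in> S" and "c J0 \<noteq> 0"
  shows "L2_infty_weighted u (monomial J0)"
proof -
  \<comment> \<open>N exceeds every exponent of P, so averaging over N-th roots of unity isolates c J0.\<close>
  define N where "N = Suc (\<Sum>J\<in>S. \<Sum>j\<in>UNIV. J j)"
  have N: "J j < N" if "J \<in> S" for J j
  proof -
    have "J j \<le> (\<Sum>j\<in>UNIV. J j)"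
      by (rule member_le_sum) auto
    also have "\<dots> \<le> (\<Sum>J\<in>S. \<Sum>j\<in>UNIV. J j)"
      by (rule member_le_sum[OF that]) (auto simp: \<open>finite S\<close>)
    finally show ?thesis
      unfolding N_def by simp
  qed
  define \<omega> where "\<omega> = cis (2 * pi / N)"
  have P_meas [measurable]: "P \<in> borel_measurable borel"
    unfolding P[abs_def] by measurable
  have P_rot_meas: "(\<lambda>z. P (diag_scale v z)) \<in> borel_measurable borel" for v
    by measurable
  have "L2_infty_weighted u (\<lambda>z. P (diag_scale (\<lambda>j. \<omega> ^ k j) z))" for k
    by (rule L2_infty_weighted_compose_diag_scale[OF assms(1) _ assms(2) P_meas assms(5)])
      (simp add: \<omega>_def norm_power)
  then have "L2_infty_weighted u (\<lambda>z. \<Sum>k\<in>PiE UNIV (\<lambda>_. {..<N}).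
          cnj (\<Prod>j\<in>UNIV. (\<omega> ^ k j) ^ J0 j) * P (diag_scale (\<lambda>j. \<omega> ^ k j) z))"
    by (intro L2_infty_weighted_sum L2_infty_weighted_cmult) (simp_all add: finite_PiE P_rot_meas)
  moreover have "(\<Sum>k\<in>PiE UNIV (\<lambda>_. {..<N}). cnj (\<Prod>j\<in>UNIV. (\<omega> ^ k j) ^ J0 j) * P (diag_scale (\<lambda>j. \<omega> ^ k j) z))
      = (of_nat N ^ CARD('n) * c J0) * monomial J0 z" for z
    unfolding P \<omega>_def by (rule sum_torus_orbit_extracts_monomial) (use N assms(3,6) in auto)
  ultimately have "L2_infty_weighted u (\<lambda>z. (of_nat N ^ CARD('n) * c J0) * monomial J0 z)"
    by simp
  moreover have "of_nat N ^ CARD('n) * c J0 \<noteq> 0"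
    using \<open>c J0 \<noteq> 0\<close> by (simp add: N_def del: of_nat_Suc)
  ultimately show ?thesis
    using L2_infty_weighted_cmult_iff[OF _ assms(2) borel_measurable_monomial] by blast
qed

section \<open>Degree bound from logarithmic growth\<close>

definition diag_box :: "real \<Rightarrow> (complex^'n) set" where
  "diag_box t = cbox (\<chi> j. complex_of_real t) (\<chi> j. Complex (t + 1) 1)"

lemma emeasure_diag_box: "emeasure lborel (diag_box t :: (complex^'n) set) = 1"
proof -
  let ?a = "(\<chi> j. complex_of_real t) :: complex^'n" and ?b = "(\<chi> j. Complex (t + 1) 1) :: complex^'n"
  have side: "(?b - ?a) \<bullet> e = 1" if "e \<in> Basis" for e
    using that by (auto simp: Basis_vec_def Basis_complex_def inner_axis)
  then have "?a \<bullet> e \<le> ?b \<bullet> e" if "e \<in> Basis" for e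
    using side[OF that] unfolding inner_diff_left by linarith
  then have "emeasure lborel (cbox ?a ?b) = (\<Prod>e\<in>Basis. (?b - ?a) \<bullet> e)"
    by (rule emeasure_lborel_cbox)
  also have "\<dots> = 1"
    using side by simp
  finally show ?thesis
    unfolding diag_box_def .
qed

lemma mem_diag_box:
  fixes z :: "complex^'n"
  assumes "z \<in> diag_box t"
  shows "t \<le> Re (z$j)" "Re (z$j) \<le> t + 1" "0 \<le> Im (z$j)" "Im (z$j) \<le> 1"
proof -
  have "axis j 1 \<in> (Basis :: (complex^'n) set)" "axis j \<i> \<in> (Basis :: (complex^'n) set)"
    by (auto simp: Basis_vec_def)
  then have "(\<chi> j. complex_of_real t) \<bullet> e \<le> z \<bullet> e \<and> z \<bullet> e \<le> (\<chi> j. Complex (t + 1) 1) \<bullet> e"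
    if "e \<in> {axis j 1, axis j \<i>}" for e
    using assms that unfolding diag_box_def mem_box by blast
  from this[of "axis j 1"] this[of "axis j \<i>"]
  show "t \<le> Re (z$j)" "Re (z$j) \<le> t + 1" "0 \<le> Im (z$j)" "Im (z$j) \<le> 1"
    by (simp_all add: inner_axis)
qed

lemma norm_diag_box:
  fixes z :: "complex^'n" and t :: real
  assumes "z \<in> diag_box t" and "1 \<le> t"
  shows "t \<le> norm (z$j)" "norm (z$j) \<le> 3 * t" "t \<le> norm z" "norm z \<le> 3 * real CARD('n) * t"
proof -
  show nth_ge: "t \<le> norm (z$j)" for j
    using mem_diag_box[OF assms(1)] complex_Re_le_cmod[of "z$j"] by (meson order_trans)
  show nth_le: "norm (z$j) \<le> 3 * t" for j
    using mem_diag_box[OF assms(1), of j] cmod_le[of "z$j"] assms(2) by linarith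
  show "t \<le> norm z"
    using nth_ge Finite_Cartesian_Product.norm_nth_le[of z] by (meson order_trans)
  have "norm z \<le> (\<Sum>j\<in>UNIV. norm (z$j))"
    by (simp add: norm_vec_def L2_set_le_sum)
  also have "\<dots> \<le> (\<Sum>j\<in>(UNIV::'n set). 3 * t)"
    by (intro sum_mono nth_le)
  finally show "norm z \<le> 3 * real CARD('n) * t"
    by simp
qed

lemma monomial_weight_ge_on_diag_box:
  fixes u :: "complex^'n::finite \<Rightarrow> ereal" and J :: "'n \<Rightarrow> nat"
  assumes "A \<ge> 0" and bnd: "\<And>z. R \<le> norm z \<Longrightarrow> u z \<le> ereal (A * ln (norm z))"
    and z: "z \<in> diag_box t" and "1 \<le> t" "R \<le> t" and deg: "A + 1 \<le> real (\<Sum>j\<in>UNIV. J j)"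
  shows "ennreal ((3 * real CARD('n)) powr (-A) * t) \<le> ennreal (norm (monomial J z)) * eexp (- u z)"
proof -
  define d where "d = (\<Sum>j\<in>UNIV. J j)"
  have norm_z: "t \<le> norm z" "norm z \<le> 3 * real CARD('n) * t"
    using norm_diag_box[OF z \<open>1 \<le> t\<close>] by auto
  have "t ^ d = (\<Prod>j\<in>UNIV. t ^ J j)"
    unfolding d_def by (rule power_sum)
  also have "\<dots> \<le> (\<Prod>j\<in>UNIV. norm (z$j) ^ J j)"
    using norm_diag_box(1)[OF z \<open>1 \<le> t\<close>] \<open>1 \<le> t\<close> by (intro prod_mono) (auto intro: power_mono)
  also have "\<dots> = norm (monomial J z)"
    unfolding monomial_def by (simp add: prod_norm[symmetric] norm_power)
  finally have monomial_ge: "t ^ d \<le> norm (monomial J z)" .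
  have "t = t powr 1"
    using \<open>1 \<le> t\<close> by simp
  also have "\<dots> \<le> t powr (real d + - A)"
    by (rule powr_mono) (use deg \<open>1 \<le> t\<close> in \<open>auto simp: d_def\<close>)
  also have "\<dots> = t ^ d * t powr (-A)"
    using \<open>1 \<le> t\<close> by (simp only: powr_add powr_realpow)
  finally have "t \<le> t ^ d * t powr (-A)" .
  then have "(3 * real CARD('n)) powr (-A) * t \<le> t ^ d * (3 * real CARD('n) * t) powr (-A)"
    using \<open>1 \<le> t\<close> by (simp add: powr_mult mult_left_mono mult.left_commute)
  also have "\<dots> \<le> t ^ d * norm z powr (-A)"
    using norm_z \<open>A \<ge> 0\<close> \<open>1 \<le> t\<close> by (intro mult_left_mono powr_mono2') auto
  finally have "ennreal ((3 * real CARD('n)) powr (-A) * t) \<le> ennreal (t ^ d) * ennreal (norm z powr (-A))"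
    using \<open>1 \<le> t\<close> by (simp add: ennreal_leI ennreal_mult[symmetric])
  also have "\<dots> \<le> ennreal (norm (monomial J z)) * eexp (- u z)"
  proof (intro mult_mono ennreal_leI monomial_ge)
    have "u z \<le> ereal (A * ln (norm z))"
      using bnd norm_z \<open>R \<le> t\<close> by simp
    then have "ereal (- (A * ln (norm z))) \<le> - u z"
      by (simp only: ereal_minus_le_minus flip: uminus_ereal.simps(1))
    then have "eexp (ereal (- (A * ln (norm z)))) \<le> eexp (- u z)"
      by (rule eexp_mono)
    then show "ennreal (norm z powr (-A)) \<le> eexp (- u z)"
      using norm_z \<open>1 \<le> t\<close> by (simp add: eexp_def powr_def)
  qed auto
  finally show ?thesis .
qed

lemma degree_lt_of_L2_infty_weighted_monomial:
  fixes u :: "complex^'n::finite \<Rightarrow> ereal" and J :: "'n \<Rightarrow> nat"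
  assumes "A \<ge> 0" and bnd: "\<And>z. R \<le> norm z \<Longrightarrow> u z \<le> ereal (A * ln (norm z))"
    and "L2_infty_weighted u (monomial J)"
  shows "real (\<Sum>j\<in>UNIV. J j) < A + 1"
proof (rule ccontr)
  assume "\<not> ?thesis"
  then have deg: "A + 1 \<le> real (\<Sum>j\<in>UNIV. J j)"
    by simp
  define f where "f z = ennreal (norm (monomial J z)) * eexp (- u z)" for z
  obtain K where "compact K" and K: "(\<integral>\<^sup>+ z\<in>(UNIV - K). (f z)^2 \<partial>lborel) < \<infinity>"
    using assms(3) unfolding L2_infty_weighted_def L2_infty_def f_def by blast
  then obtain r where "0 \<le> r" and r: "(\<integral>\<^sup>+ z\<in>(UNIV - K). (f z)^2 \<partial>lborel) = ennreal r"
    by (cases "(\<integral>\<^sup>+ z\<in>(UNIV - K). (f z)^2 \<partial>lborel)") auto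
  obtain M where M: "\<And>x. x \<in> K \<Longrightarrow> norm x \<le> M"
    using compact_imp_bounded[OF \<open>compact K\<close>] unfolding bounded_iff by blast
  define C where "C = (3 * real CARD('n)) powr (-A)"
  have "C > 0"
    unfolding C_def by simp
  \<comment> \<open>On the unit box at distance t the weighted monomial is at least C * t, so its square
    integrates to more than r once t is large.\<close>
  define t where "t = max (max R (M + 1)) (max 1 ((r + 1) / C))"
  have "1 \<le> t" "R \<le> t" "M < t" "(r + 1) / C \<le> t"
    by (auto simp: t_def)
  then have "r + 1 \<le> C * t"
    using \<open>C > 0\<close> by (simp add: pos_divide_le_eq mult.commute)
  have box_le: "ennreal (r + 1) * indicator (diag_box t) z \<le> (f z)^2 * indicator (UNIV - K) z" for z
  proof (cases "z \<in> diag_box t")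
    case True
    then have "z \<notin> K"
      using M norm_diag_box(3)[OF True \<open>1 \<le> t\<close>] \<open>M < t\<close> by force
    have "ennreal (r + 1) \<le> ennreal ((C * t)^2)"
      using \<open>r + 1 \<le> C * t\<close> \<open>0 \<le> r\<close> mult_left_mono[of 1 "C * t" "C * t"]
      by (intro ennreal_leI) (simp add: power2_eq_square)
    also have "\<dots> = (ennreal (C * t))^2"
      using \<open>C > 0\<close> \<open>1 \<le> t\<close> by (simp add: ennreal_power)
    also have "\<dots> \<le> (f z)^2"
      unfolding f_def C_def
      using monomial_weight_ge_on_diag_box[OF \<open>A \<ge> 0\<close> bnd True \<open>1 \<le> t\<close> \<open>R \<le> t\<close> deg]
      by (intro power_mono) simp_all
    finally show ?thesis
      using True \<open>z \<notin> K\<close> by simp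
  qed simp
  have "diag_box t \<in> sets (lborel :: (complex^'n) measure)"
    unfolding diag_box_def by simp
  then have "ennreal (r + 1) = (\<integral>\<^sup>+ z. ennreal (r + 1) * indicator (diag_box t) (z :: complex^'n) \<partial>lborel)"
    by (simp add: nn_integral_cmult_indicator emeasure_diag_box)
  also have "\<dots> \<le> ennreal r"
    unfolding r[symmetric] by (intro nn_integral_mono) (use box_le in auto)
  finally show False
    using \<open>0 \<le> r\<close> by simp
qed

lemma finite_L2_infty_weighted_monomials:
  fixes u :: "complex^'n::finite \<Rightarrow> ereal"
  assumes "A \<ge> 0" and "\<And>z. R \<le> norm z \<Longrightarrow> u z \<le> ereal (A * ln (norm z))"
  shows "finite {J. L2_infty_weighted u (monomial J)}"
proof (rule finite_subset)
  show "{J. L2_infty_weighted u (monomial J)} \<subseteq> PiE UNIV (\<lambda>_. {..nat \<lceil>A\<rceil>})"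
  proof (clarsimp simp: PiE_iff)
    fix J :: "'n \<Rightarrow> nat" and i
    assume "L2_infty_weighted u (monomial J)"
    then have "real (\<Sum>j\<in>UNIV. J j) < A + 1"
      using degree_lt_of_L2_infty_weighted_monomial assms by blast
    moreover have "J i \<le> (\<Sum>j\<in>UNIV. J j)"
      by (rule member_le_sum) auto
    ultimately show "J i \<le> nat \<lceil>A\<rceil>"
      by linarith
  qed
qed (simp add: finite_PiE)

lemma usc_borel_measurable:
  fixes u :: "'a::topological_space \<Rightarrow> ereal"
  assumes "usc u"
  shows "u \<in> borel_measurable borel"
proof (rule borel_measurableI_less)
  fix y :: ereal
  show "{x \<in> space borel. u x < y} \<in> sets borel"
  proof (cases y)
    case PInf
    have "{x \<in> space borel. u x < y} = (\<Union>n::nat. {x. u x < ereal (real n)})"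
      using PInf less_PInf_Ex_of_nat by auto
    also have "\<dots> \<in> sets borel"
      using assms unfolding usc_def by (intro sets.countable_UN) (auto intro!: borel_open)
    finally show ?thesis .
  qed (use assms in \<open>auto simp: usc_def intro!: borel_open\<close>)
qed

lemma Limsup_log_growth_bound:
  fixes u :: "'a::real_normed_vector \<Rightarrow> ereal"
  assumes "Limsup at_infinity (\<lambda>z. u z / ereal (ln (norm z))) < \<infinity>"
  obtains A R where "A \<ge> 0" "\<And>z. R \<le> norm z \<Longrightarrow> u z \<le> ereal (A * ln (norm z))"
proof -
  obtain m :: nat where "Limsup at_infinity (\<lambda>z. u z / ereal (ln (norm z))) < ereal (real m)"
    using assms less_PInf_Ex_of_nat by auto
  then have "eventually (\<lambda>z. u z / ereal (ln (norm z)) < ereal (real m)) at_infinity"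
    by (rule Limsup_lessD)
  then obtain b where b: "\<And>z. b \<le> norm z \<Longrightarrow> u z / ereal (ln (norm z)) < ereal (real m)"
    unfolding eventually_at_infinity by blast
  show ?thesis
  proof (rule that[of "real m" "max b 3"])
    fix z :: 'a assume z: "max b 3 \<le> norm z"
    then have "ln (norm z) > 0"
      by (intro ln_gt_zero) simp
    with b[of z] z show "u z \<le> ereal (real m * ln (norm z))"
      by (cases "u z") (auto simp: ereal_divide pos_divide_less_eq)
  qed simp
qed

lemma polynomial_in_span_of_L2_infty_weighted_monomials:
  fixes u :: "complex^'n::finite \<Rightarrow> ereal"
  defines "F \<equiv> {J. L2_infty_weighted u (monomial J)}"
  assumes "toric u" and "u \<in> borel_measurable borel" and "finite F"
    and "polynomial_fun P" and "L2_infty_weighted u P"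
  shows "\<exists>c. \<forall>z. P z = (\<Sum>J\<in>F. c J * monomial J z)"
proof -
  obtain S c where "finite S" and P: "\<And>z. P z = (\<Sum>J\<in>S. c J * monomial J z)"
    using \<open>polynomial_fun P\<close> unfolding polynomial_fun_def by blast
  have support: "{J \<in> S. c J \<noteq> 0} \<subseteq> F"
    using L2_infty_weighted_monomial_of_polynomial[OF assms(2,3) \<open>finite S\<close> P assms(6)]
    unfolding F_def by blast
  show ?thesis
  proof (intro exI allI)
    fix z
    have "P z = (\<Sum>J\<in>F \<inter> S. c J * monomial J z)"
      unfolding P by (rule sum.mono_neutral_right[OF \<open>finite S\<close>]) (use support in auto)
    also have "\<dots> = (\<Sum>J\<in>F. (if J \<in> S then c J else 0) * monomial J z)"
      by (simp add: sum.inter_restrict[OF \<open>finite F\<close>] if_distrib[of "\<lambda>x. x * _"] cong: if_cong)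
    finally show "P z = (\<Sum>J\<in>F. (if J \<in> S then c J else 0) * monomial J z)" .
  qed
qed

theorem proposition8p3:
  fixes u :: "complex^'n::finite \<Rightarrow> ereal"
  assumes "LPSH_star u" and "toric u" and "c_infty u < 1"
  shows "\<exists>F. finite F \<and> (\<forall>J\<in>F. monomial J \<in> P_infty u)
           \<and> (\<forall>P\<in>P_infty u. \<exists>c. \<forall>z. P z = (\<Sum>J\<in>F. c J * monomial J z))"
proof -
  define F where "F = {J. L2_infty_weighted u (monomial J)}"
  have "psh u" and growth: "Limsup at_infinity (\<lambda>z. u z / ereal (ln (norm z))) < \<infinity>"
    using assms(1) unfolding LPSH_star_def by blast+
  then have u_meas: "u \<in> borel_measurable borel"
    unfolding psh_def by (blast intro: usc_borel_measurable)
  obtain A R where "A \<ge> 0" "\<And>z. R \<le> norm z \<Longrightarrow> u z \<le> ereal (A * ln (norm z))"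
    using Limsup_log_growth_bound[OF growth] by blast
  then have "finite F"
    unfolding F_def by (rule finite_L2_infty_weighted_monomials)
  have P_infty_eq: "P_infty u = {P. polynomial_fun P \<and> L2_infty_weighted u P}"
    unfolding P_infty_def L2_infty_weighted_def ..
  have "polynomial_fun (monomial J)" for J
    unfolding polynomial_fun_def by (intro exI[of _ "{J}"] exI[of _ "\<lambda>_. 1"]) simp
  then have "\<forall>J\<in>F. monomial J \<in> P_infty u"
    unfolding P_infty_eq F_def by blast
  moreover have "\<forall>P\<in>P_infty u. \<exists>c. \<forall>z. P z = (\<Sum>J\<in>F. c J * monomial J z)"
    unfolding P_infty_eq F_def
    using polynomial_in_span_of_L2_infty_weighted_monomials[OF assms(2) u_meas \<open>finite F\<close>[unfolded F_def]]
    by blast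
  ultimately show ?thesis
    using \<open>finite F\<close> by blast
qed

end
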